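(* Let $V$ be a nonempty finite set and let $B \subseteq \mathbb{Z}^V$ be a nonempty set satisfying ($\Delta$-EXC): for any $p, q \in B$ and any $u \in \operatorname{supp}(q-p)$, there exists $\alpha \in \Phi_B(p,q)$ with $u \in \operatorname{supp}(\alpha)$. Let $q, r \in B$ with $q \neq r$. Then there exist $k, l \ge 1$ and vectors $\alpha_1, \dots, \alpha_k \in \Phi_B(q,r)$ and $\beta_1, \dots, \beta_l \in \Phi_B(r,q)$ (not necessarily distinct) such that $\sum_{i=1}^k \alpha_i + \sum_{j=1}^l \beta_j = \mathbf{0}$.
   Context: For $t \in \mathbb{R}^V$, $\operatorname{supp}(t) = \{u \in V : t(u) \neq 0\}$; $\|p\|_1 = \sum_{u \in V}|p(u)|$; $\chi_u$ is the $u$-th unit vector. Let $\Phi = \{\pm \chi_u : u \in V\} \cup \{\pm\chi_u \pm \chi_v : u, v \in V, u \ne v\}$. For $p, q \in \mathbb{Z}^V$, $\Phi(p,q) = \{\alpha \in \Phi : \|q - (p+\alpha)\|_1 = \|q-p\|_1 - \|\alpha\|_1\}$, and for $B \subseteq \mathbb{Z}^V$ and $p,q \in B$, $\Phi_B(p,q) = \{\alpha \in \Phi(p,q) : p + \alpha \in B\}$. *)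

theory Defs
  imports Main "HOL-Library.Function_Algebras"
begin

text \<open>Vectors in Z^V are functions 'v => int, with V = UNIV of a finite type 'v.\<close>

definition supp :: "('v \<Rightarrow> int) \<Rightarrow> 'v set" where
  "supp t = {u. t u \<noteq> 0}"

definition norm1 :: "('v::finite \<Rightarrow> int) \<Rightarrow> int" where
  "norm1 p = (\<Sum>u\<in>UNIV. \<bar>p u\<bar>)"

definition chi :: "'v \<Rightarrow> ('v \<Rightarrow> int)" where
  "chi u = (\<lambda>v. if v = u then 1 else 0)"

definition Phi :: "('v \<Rightarrow> int) set" where
  "Phi = {chi u | u. True} \<union> {- chi u | u. True}
        \<union> {(\<lambda>w. s * chi u w + t * chi v w) | u v s t. u \<noteq> v \<and> s \<in> {1, -1::int} \<and> t \<in> {1, -1::int}}"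

definition PhiPQ :: "('v::finite \<Rightarrow> int) \<Rightarrow> ('v \<Rightarrow> int) \<Rightarrow> ('v \<Rightarrow> int) set" where
  "PhiPQ p q = {\<alpha> \<in> Phi. norm1 (q - (p + \<alpha>)) = norm1 (q - p) - norm1 \<alpha>}"

definition PhiB :: "('v::finite \<Rightarrow> int) set \<Rightarrow> ('v \<Rightarrow> int) \<Rightarrow> ('v \<Rightarrow> int) \<Rightarrow> ('v \<Rightarrow> int) set" where
  "PhiB B p q = {\<alpha> \<in> PhiPQ p q. p + \<alpha> \<in> B}"

definition delta_exc :: "('v::finite \<Rightarrow> int) set \<Rightarrow> bool" where
  "delta_exc B \<longleftrightarrow> (\<forall>p\<in>B. \<forall>q\<in>B. \<forall>u\<in>supp (q - p). \<exists>\<alpha>\<in>PhiB B p q. u \<in> supp \<alpha>)"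

end

theory Submission
  imports Defs
begin

text \<open>Put d = r - q. Every \<alpha> \<in> \<Phi>(p,q) changes at most two coordinates, each by one unit in the
  direction of sgn (q - p); so \<alpha> is the sum of the half-steps sgn ((q - p) u) \<chi> u and sgn ((q - p) w) \<chi> w
  (with u = w, and \<alpha> counted twice, when its support is a single point). By (\<Delta>-EXC), for every
  u \<in> supp d and each direction c (towards r or towards q) we may choose such an \<alpha> \<in> \<Phi>_B covering u;
  its second support point w defines a map T (u, c) = (w, \<not> c) on supp d \<times> bool. Writing D (u, c)
  for the half-step at u in direction c, half-steps in opposite directions are negatives of each other,
  so the vectors chosen at s sum to D s - D (T s). A self-map of a finite set permutes some nonempty subset
  Z, over which these differences telescope to zero; as T switches direction, Z contains both
  directions.\<close>

definition sgn_unit :: "('v \<Rightarrow> int) \<Rightarrow> 'v \<Rightarrow> ('v \<Rightarrow> int)" where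
  "sgn_unit d u = (\<lambda>v. sgn (d u) * chi u v)"

definition oriented_diff :: "('v \<Rightarrow> int) \<Rightarrow> ('v \<Rightarrow> int) \<Rightarrow> bool \<Rightarrow> ('v \<Rightarrow> int)" where
  "oriented_diff q r c = (if c then r - q else q - r)"

lemma sgn_unit_uminus: "sgn_unit (- d) u = - sgn_unit d u"
  by (auto simp: sgn_unit_def)

lemma supp_uminus: "supp (- t) = supp t"
  by (simp add: supp_def)

lemma Phi_values_and_supp:
  assumes "\<alpha> \<in> Phi"
  shows "\<alpha> v \<in> {-1, 0, 1}" and "\<exists>x y. supp \<alpha> \<subseteq> {x, y}"
proof -
  from assms obtain x y where "\<alpha> = chi x \<or> \<alpha> = - chi x
      \<or> (x \<noteq> y \<and> (\<exists>s t. s \<in> {1, -1} \<and> t \<in> {1, -1} \<and> \<alpha> = (\<lambda>w. s * chi x w + t * chi y w)))"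
    unfolding Phi_def by blast
  then have "\<alpha> v \<in> {-1, 0, 1} \<and> supp \<alpha> \<subseteq> {x, y}"
    by (auto simp: chi_def supp_def split: if_splits)
  then show "\<alpha> v \<in> {-1, 0, 1}" and "\<exists>x y. supp \<alpha> \<subseteq> {x, y}"
    by blast+
qed

lemma PhiPQ_conformal:
  fixes p q \<alpha> :: "'v::finite \<Rightarrow> int"
  assumes "\<alpha> \<in> PhiPQ p q" and "\<alpha> v \<noteq> 0"
  shows "\<alpha> v = sgn ((q - p) v)"
proof -
  define d where "d = q - p"
  have "\<alpha> \<in> Phi" and "norm1 (d - \<alpha>) = norm1 d - norm1 \<alpha>"
    using assms(1) unfolding PhiPQ_def d_def by (auto simp: algebra_simps)
  then have "(\<Sum>u\<in>UNIV. \<bar>d u - \<alpha> u\<bar> - (\<bar>d u\<bar> - \<bar>\<alpha> u\<bar>)) = 0"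
    unfolding norm1_def by (simp add: sum_subtractf)
  then have "\<bar>d v - \<alpha> v\<bar> = \<bar>d v\<bar> - \<bar>\<alpha> v\<bar>"
    by (subst (asm) sum_nonneg_eq_0_iff) auto
  moreover have "\<alpha> v \<in> {-1, 1}"
    using Phi_values_and_supp(1)[OF \<open>\<alpha> \<in> Phi\<close>] assms(2) by auto
  ultimately show ?thesis
    unfolding d_def by (auto simp: sgn_if)
qed

lemma PhiPQ_two_point_form:
  fixes p q \<alpha> :: "'v::finite \<Rightarrow> int"
  assumes "\<alpha> \<in> PhiPQ p q" and "u \<in> supp \<alpha>"
  obtains w where "w \<in> supp (q - p)"
    and "\<alpha> = (\<lambda>v. if v = u \<or> v = w then sgn ((q - p) v) else 0)"
proof -
  obtain x y where xy: "supp \<alpha> \<subseteq> {x, y}"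
    using assms(1) Phi_values_and_supp(2) unfolding PhiPQ_def by blast
  obtain w where w: "supp \<alpha> = {u, w}"
  proof (cases "supp \<alpha> \<subseteq> {u}")
    case True
    then show thesis using that[of u] assms(2) by blast
  next
    case False
    then obtain w where "w \<in> supp \<alpha>" "w \<noteq> u" by blast
    then show thesis using that[of w] xy assms(2) by blast
  qed
  have "\<alpha> = (\<lambda>v. if v = u \<or> v = w then sgn ((q - p) v) else 0)"
  proof
    fix v
    show "\<alpha> v = (if v = u \<or> v = w then sgn ((q - p) v) else 0)"
      using PhiPQ_conformal[OF assms(1), of v] w unfolding supp_def by auto
  qed
  moreover have "\<alpha> w \<noteq> 0"
    using w unfolding supp_def by blast
  then have "w \<in> supp (q - p)"
    using PhiPQ_conformal[OF assms(1), of w] unfolding supp_def by auto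
  ultimately show thesis using that by blast
qed

lemma delta_exc_half_steps:
  fixes B :: "('v::finite \<Rightarrow> int) set"
  assumes "delta_exc B" and "p \<in> B" and "q \<in> B" and "u \<in> supp (q - p)"
  shows "\<exists>xs w. xs \<noteq> [] \<and> set xs \<subseteq> PhiB B p q \<and> w \<in> supp (q - p)
           \<and> sum_list xs = sgn_unit (q - p) u + sgn_unit (q - p) w"
proof -
  obtain \<alpha> where \<alpha>: "\<alpha> \<in> PhiB B p q" "u \<in> supp \<alpha>"
    using assms unfolding delta_exc_def by blast
  then obtain w where "w \<in> supp (q - p)"
    and w: "\<alpha> = (\<lambda>v. if v = u \<or> v = w then sgn ((q - p) v) else 0)"
    using PhiPQ_two_point_form[of \<alpha> p q u] unfolding PhiB_def by blast
  \<comment> \<open>a one-point \<open>\<alpha>\<close> is counted twice, so that it also accounts for two half-steps\<close>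
  have "sum_list (if w = u then [\<alpha>, \<alpha>] else [\<alpha>]) = sgn_unit (q - p) u + sgn_unit (q - p) w"
    using w by (auto simp: sgn_unit_def chi_def fun_eq_iff)
  then show ?thesis
    using \<alpha>(1) \<open>w \<in> supp (q - p)\<close>
    by (intro exI[of _ "if w = u then [\<alpha>, \<alpha>] else [\<alpha>]"] exI[of _ w]) simp
qed

lemma delta_exc_oriented_half_steps:
  fixes B :: "('v::finite \<Rightarrow> int) set"
  assumes "delta_exc B" and "q \<in> B" and "r \<in> B" and "u \<in> supp (r - q)"
  shows "\<exists>xs w. xs \<noteq> [] \<and> set xs \<subseteq> (if c then PhiB B q r else PhiB B r q) \<and> w \<in> supp (r - q)
           \<and> sum_list xs = sgn_unit (oriented_diff q r c) u - sgn_unit (oriented_diff q r (\<not> c)) w"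
proof -
  have "q - r = - (r - q)"
    by simp
  then have supp_eq: "supp (q - r) = supp (r - q)"
    and sgn_eq: "\<And>w. sgn_unit (q - r) w = - sgn_unit (r - q) w"
    by (simp_all only: supp_uminus sgn_unit_uminus)
  show ?thesis
  proof (cases c)
    case True
    then show ?thesis
      using delta_exc_half_steps[OF assms(1,2,3,4)] sgn_eq by (simp add: oriented_diff_def)
  next
    case False
    then show ?thesis
      using delta_exc_half_steps[OF assms(1,3,2), of u] assms(4) supp_eq sgn_eq
      by (simp add: oriented_diff_def)
  qed
qed

lemma finite_self_map_invariant_subset:
  assumes "finite X" and "X \<noteq> {}" and "T ` X \<subseteq> X"
  shows "\<exists>Z \<subseteq> X. Z \<noteq> {} \<and> T ` Z = Z"
  using assms
proof (induction "card X" arbitrary: X rule: less_induct)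
  case less
  show ?case
  proof (cases "T ` X = X")
    case True
    then show ?thesis
      using less.prems(2) by blast
  next
    case False
    then have "card (T ` X) < card X"
      using less.prems(1,3) by (simp add: psubset_card_mono psubset_eq)
    moreover have "finite (T ` X)" "T ` X \<noteq> {}" "T ` (T ` X) \<subseteq> T ` X"
      using less.prems by auto
    ultimately obtain Z where "Z \<subseteq> T ` X" "Z \<noteq> {}" "T ` Z = Z"
      using less.hyps[of "T ` X"] by blast
    then show ?thesis
      using less.prems(3) by (meson order_trans)
  qed
qed

lemma sum_telescope_permuted:
  fixes D :: "'a \<Rightarrow> 'b::ab_group_add"
  assumes "finite Z" and "T ` Z = Z"
  shows "(\<Sum>s\<in>Z. D s - D (T s)) = 0"
proof -
  have "inj_on T Z"
    using assms by (simp add: eq_card_imp_inj_on)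
  then have "(\<Sum>s\<in>Z. D (T s)) = (\<Sum>s\<in>Z. D s)"
    using sum.reindex[of T Z D] assms(2) by simp
  then show ?thesis
    by (simp add: sum_subtractf)
qed

lemma sum_over_set_as_sum_list:
  fixes f :: "'a \<Rightarrow> 'b::comm_monoid_add list"
  assumes "finite A"
  obtains xs where "set xs = (\<Union>s\<in>A. set (f s))" and "sum_list xs = (\<Sum>s\<in>A. sum_list (f s))"
proof -
  obtain zs where zs: "distinct zs" "set zs = A"
    using finite_distinct_list[OF assms] by blast
  have "sum_list (concat xss) = sum_list (map sum_list xss)" for xss :: "'b list list"
    by (induction xss) simp_all
  then have "sum_list (concat (map f zs)) = (\<Sum>s\<in>A. sum_list (f s))"
    using zs by (simp add: sum_list_distinct_conv_sum_set comp_def)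
  moreover have "set (concat (map f zs)) = (\<Union>s\<in>A. set (f s))"
    using zs(2) by simp
  ultimately show thesis using that by blast
qed

lemma zero_sum_lists_from_switching_map:
  fixes con :: "'a \<times> bool \<Rightarrow> 'b::ab_group_add list"
  assumes "finite X" and "X \<noteq> {}" and "T ` X \<subseteq> X"
    and "\<And>s. s \<in> X \<Longrightarrow> snd (T s) = (\<not> snd s)"
    and "\<And>s. s \<in> X \<Longrightarrow> con s \<noteq> []"
    and "\<And>s. s \<in> X \<Longrightarrow> sum_list (con s) = D s - D (T s)"
  obtains as bs where "as \<noteq> []" and "bs \<noteq> []"
    and "set as \<subseteq> (\<Union>s\<in>{s\<in>X. snd s}. set (con s))"
    and "set bs \<subseteq> (\<Union>s\<in>{s\<in>X. \<not> snd s}. set (con s))"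
    and "sum_list as + sum_list bs = 0"
proof -
  obtain Z where Z: "Z \<subseteq> X" "Z \<noteq> {}" "T ` Z = Z"
    using finite_self_map_invariant_subset[OF assms(1-3)] by blast
  have "finite Z"
    using Z(1) assms(1) by (rule finite_subset)
  define Z\<^sub>1 Z\<^sub>0 where "Z\<^sub>1 = Z \<inter> {s. snd s}" and "Z\<^sub>0 = Z - {s. snd s}"
  obtain s where "s \<in> Z"
    using Z(2) by blast
  moreover from this have "T s \<in> Z" and "snd (T s) = (\<not> snd s)"
    using Z(1,3) assms(4) by blast+
  ultimately obtain s\<^sub>1 s\<^sub>0 where "s\<^sub>1 \<in> Z\<^sub>1" and "s\<^sub>0 \<in> Z\<^sub>0"
    unfolding Z\<^sub>1_def Z\<^sub>0_def by (cases "snd s") auto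
  obtain as where as: "set as = (\<Union>s\<in>Z\<^sub>1. set (con s))" "sum_list as = (\<Sum>s\<in>Z\<^sub>1. sum_list (con s))"
    using sum_over_set_as_sum_list[of Z\<^sub>1 con] \<open>finite Z\<close> unfolding Z\<^sub>1_def by auto
  obtain bs where bs: "set bs = (\<Union>s\<in>Z\<^sub>0. set (con s))" "sum_list bs = (\<Sum>s\<in>Z\<^sub>0. sum_list (con s))"
    using sum_over_set_as_sum_list[of Z\<^sub>0 con] \<open>finite Z\<close> unfolding Z\<^sub>0_def by auto
  have "sum_list as + sum_list bs = (\<Sum>s\<in>Z. sum_list (con s))"
    unfolding as(2) bs(2) Z\<^sub>1_def Z\<^sub>0_def using \<open>finite Z\<close> by (rule sum.Int_Diff[symmetric])
  also have "\<dots> = (\<Sum>s\<in>Z. D s - D (T s))"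
    using Z(1) assms(6) by (intro sum.cong) auto
  also have "\<dots> = 0"
    using \<open>finite Z\<close> Z(3) by (rule sum_telescope_permuted)
  finally have "sum_list as + sum_list bs = 0" .
  moreover have "con s\<^sub>1 \<noteq> []" and "con s\<^sub>0 \<noteq> []"
    using \<open>s\<^sub>1 \<in> Z\<^sub>1\<close> \<open>s\<^sub>0 \<in> Z\<^sub>0\<close> Z(1) assms(5) unfolding Z\<^sub>1_def Z\<^sub>0_def by blast+
  then have "as \<noteq> []" and "bs \<noteq> []"
    using as(1) bs(1) \<open>s\<^sub>1 \<in> Z\<^sub>1\<close> \<open>s\<^sub>0 \<in> Z\<^sub>0\<close> by auto
  moreover have "set as \<subseteq> (\<Union>s\<in>{s\<in>X. snd s}. set (con s))"
    and "set bs \<subseteq> (\<Union>s\<in>{s\<in>X. \<not> snd s}. set (con s))"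
    using as(1) bs(1) Z(1) unfolding Z\<^sub>1_def Z\<^sub>0_def by auto
  ultimately show thesis
    using that by blast
qed

lemma zero_sum_lists_from_switching_choice:
  fixes D :: "'a \<times> bool \<Rightarrow> 'b::ab_group_add"
  assumes "finite X" and "X \<noteq> {}"
    and "\<And>s. s \<in> X \<Longrightarrow> \<exists>xs t. xs \<noteq> [] \<and> set xs \<subseteq> P (snd s) \<and> t \<in> X \<and> snd t = (\<not> snd s)
                              \<and> sum_list xs = D s - D t"
  shows "\<exists>as bs. as \<noteq> [] \<and> bs \<noteq> [] \<and> set as \<subseteq> P True \<and> set bs \<subseteq> P False
           \<and> sum_list as + sum_list bs = 0"
proof -
  obtain con T where con: "\<And>s. s \<in> X \<Longrightarrow> con s \<noteq> [] \<and> set (con s) \<subseteq> P (snd s) \<and> T s \<in> X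
      \<and> snd (T s) = (\<not> snd s) \<and> sum_list (con s) = D s - D (T s)"
    using assms(3) by metis
  then have "T ` X \<subseteq> X"
    by blast
  then obtain as bs where "as \<noteq> []" and "bs \<noteq> []"
    and "set as \<subseteq> (\<Union>s\<in>{s\<in>X. snd s}. set (con s))"
    and "set bs \<subseteq> (\<Union>s\<in>{s\<in>X. \<not> snd s}. set (con s))"
    and "sum_list as + sum_list bs = 0"
    using zero_sum_lists_from_switching_map[OF assms(1,2), of T con D] con by blast
  moreover from calculation(3,4) have "set as \<subseteq> P True" and "set bs \<subseteq> P False"
    using con by fastforce+
  ultimately show ?thesis
    by blast
qed

theorem mainTheorem2:
  fixes B :: "('v::finite \<Rightarrow> int) set" and q r :: "'v \<Rightarrow> int"
  assumes "B \<noteq> {}" and "delta_exc B"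
    and "q \<in> B" and "r \<in> B" and "q \<noteq> r"
  shows "\<exists>as bs. as \<noteq> [] \<and> bs \<noteq> [] \<and> set as \<subseteq> PhiB B q r \<and> set bs \<subseteq> PhiB B r q
           \<and> sum_list as + sum_list bs = 0"
proof -
  define X where "X = supp (r - q) \<times> (UNIV :: bool set)"
  define D where "D s = sgn_unit (oriented_diff q r (snd s)) (fst s)" for s
  obtain v where "q v \<noteq> r v"
    using assms(5) by (auto simp: fun_eq_iff)
  then have "(v, True) \<in> X"
    unfolding X_def supp_def by auto
  moreover have "\<exists>xs t. xs \<noteq> [] \<and> set xs \<subseteq> (if snd s then PhiB B q r else PhiB B r q) \<and> t \<in> X
      \<and> snd t = (\<not> snd s) \<and> sum_list xs = D s - D t" if "s \<in> X" for s
    using delta_exc_oriented_half_steps[OF assms(2,3,4), of "fst s" "snd s"] that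
    unfolding X_def D_def by fastforce
  ultimately show ?thesis
    using zero_sum_lists_from_switching_choice[of X "\<lambda>c. if c then PhiB B q r else PhiB B r q" D]
    unfolding X_def by auto
qed

end
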